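(* Let $k \geq 2$ be an integer, let $G$ be a $k$-connected $(K_2 \cup kK_1)$-free graph, and let $C$ be a longest cycle in $G$. Then every component of $G - V(C)$ consists of a single vertex.
   Context: All graphs are finite, undirected and simple. For graphs $R, R'$, $R \cup R'$ is their disjoint union and $kR$ is the disjoint union of $k$ copies of $R$; $K_n$ is the complete graph on $n$ vertices. A graph $G$ is $R$-free if it contains no induced subgraph isomorphic to $R$. *)

theory Defs
  imports Main
begin

definition graph :: "'a set \<Rightarrow> ('a \<Rightarrow> 'a \<Rightarrow> bool) \<Rightarrow> bool" where
  "graph V E \<longleftrightarrow> finite V \<and> (\<forall>x y. E x y \<longrightarrow> x \<in> V \<and> y \<in> V)
     \<and> (\<forall>x y. E x y \<longrightarrow> E y x) \<and> (\<forall>x. \<not> E x x)"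

definition induced_edges :: "('a \<Rightarrow> 'a \<Rightarrow> bool) \<Rightarrow> 'a set \<Rightarrow> 'a \<Rightarrow> 'a \<Rightarrow> bool" where
  "induced_edges E S x y \<longleftrightarrow> x \<in> S \<and> y \<in> S \<and> E x y"

definition connected_graph :: "'a set \<Rightarrow> ('a \<Rightarrow> 'a \<Rightarrow> bool) \<Rightarrow> bool" where
  "connected_graph V E \<longleftrightarrow> V \<noteq> {} \<and> (\<forall>x\<in>V. \<forall>y\<in>V. (induced_edges E V)\<^sup>*\<^sup>* x y)"

definition k_connected :: "nat \<Rightarrow> 'a set \<Rightarrow> ('a \<Rightarrow> 'a \<Rightarrow> bool) \<Rightarrow> bool" where
  "k_connected k V E \<longleftrightarrow> card V > k \<and>
     (\<forall>S. S \<subseteq> V \<and> card S < k \<longrightarrow> connected_graph (V - S) (induced_edges E (V - S)))"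

definition has_induced_copy :: "'b set \<Rightarrow> ('b \<Rightarrow> 'b \<Rightarrow> bool) \<Rightarrow> 'a set \<Rightarrow> ('a \<Rightarrow> 'a \<Rightarrow> bool) \<Rightarrow> bool" where
  "has_induced_copy VR ER V E \<longleftrightarrow> (\<exists>f. inj_on f VR \<and> f ` VR \<subseteq> V \<and>
     (\<forall>x\<in>VR. \<forall>y\<in>VR. E (f x) (f y) \<longleftrightarrow> ER x y))"

definition R_free :: "'b set \<Rightarrow> ('b \<Rightarrow> 'b \<Rightarrow> bool) \<Rightarrow> 'a set \<Rightarrow> ('a \<Rightarrow> 'a \<Rightarrow> bool) \<Rightarrow> bool" where
  "R_free VR ER V E \<longleftrightarrow> \<not> has_induced_copy VR ER V E"

definition K2_kK1_V :: "nat \<Rightarrow> nat set" where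
  "K2_kK1_V k = {0..k+1}"

definition K2_kK1_E :: "nat \<Rightarrow> nat \<Rightarrow> nat \<Rightarrow> bool" where
  "K2_kK1_E k x y \<longleftrightarrow> (x = 0 \<and> y = 1) \<or> (x = 1 \<and> y = 0)"

definition is_cycle :: "'a set \<Rightarrow> ('a \<Rightarrow> 'a \<Rightarrow> bool) \<Rightarrow> 'a list \<Rightarrow> bool" where
  "is_cycle V E c \<longleftrightarrow> length c \<ge> 3 \<and> distinct c \<and> set c \<subseteq> V \<and>
     (\<forall>i < length c. E (c ! i) (c ! ((i + 1) mod length c)))"

definition longest_cycle :: "'a set \<Rightarrow> ('a \<Rightarrow> 'a \<Rightarrow> bool) \<Rightarrow> 'a list \<Rightarrow> bool" where
  "longest_cycle V E c \<longleftrightarrow> is_cycle V E c \<and> (\<forall>d. is_cycle V E d \<longrightarrow> length d \<le> length c)"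

definition is_component :: "'a set \<Rightarrow> ('a \<Rightarrow> 'a \<Rightarrow> bool) \<Rightarrow> 'a set \<Rightarrow> bool" where
  "is_component V E X \<longleftrightarrow> (\<exists>x\<in>V. X = {y \<in> V. (induced_edges E V)\<^sup>*\<^sup>* x y})"

end

theory Submission
  imports Defs
begin

text \<open>
  Suppose a component H of G - V(C) contains an edge xw. If a vertex of C has a neighbour in H,
  its successor on C has none, and the successors of two such vertices are non-adjacent:
  otherwise a path through H could be spliced into C to give a longer cycle. The vertices of C
  with a neighbour in H separate H from the rest of C, so by k-connectivity there are at least
  k of them, and x, w together with k of their successors induce K_2 \<union> kK_1.
\<close>

lemma inj_on_Suc_mod: "inj_on (\<lambda>i. Suc i mod n) {..<n}"
  by (rule inj_onI) (auto simp: mod_Suc split: if_splits)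

declare rotate_Suc [simp del]

lemma hd_rotate_Suc: "i < length xs \<Longrightarrow> hd (rotate (Suc i) xs) = xs ! (Suc i mod length xs)"
  using hd_rotate_conv_nth[of xs "Suc i"] by fastforce

lemma last_rotate_Suc:
  assumes "i < length xs"
  shows "last (rotate (Suc i) xs) = xs ! i"
proof -
  have "rotate (Suc i) xs \<noteq> []" using assms by auto
  then have "last (rotate (Suc i) xs) = rotate (Suc i) xs ! (length xs - 1)"
    by (simp add: last_conv_nth)
  also have "\<dots> = xs ! ((Suc i + (length xs - 1)) mod length xs)"
    using assms by (simp add: nth_rotate)
  also have "Suc i + (length xs - 1) = i + length xs" using assms by simp
  finally show ?thesis using assms by simp
qed

lemma rotate_Suc_split:
  assumes "i < length xs" "j < length xs" "i \<noteq> j"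
  obtains a b where "rotate (Suc i) xs = a @ b" "a \<noteq> []" "b \<noteq> []"
    "last a = xs ! j" "hd b = xs ! (Suc j mod length xs)"
proof -
  define n where "n = length xs"
  define m where "m = (j + n - Suc i) mod n"
  have j_eq: "(Suc i + m) mod n = j"
  proof -
    have "(Suc i + m) mod n = (Suc i + (j + n - Suc i)) mod n"
      unfolding m_def by (simp only: mod_add_right_eq)
    also have "Suc i + (j + n - Suc i) = j + n" using assms(1) n_def by simp
    finally show ?thesis using assms(2) n_def by simp
  qed
  have "m < n" using assms(1) unfolding n_def m_def by (intro mod_less_divisor) linarith
  moreover have "m \<noteq> n - 1"
  proof
    assume "m = n - 1"
    then have "Suc i + m = i + n" using assms(1) n_def by simp
    then have "(Suc i + m) mod n = i" using assms(1) n_def by (metis mod_add_self2 mod_less)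
    then show False using j_eq assms(3) by simp
  qed
  ultimately have "Suc m < n" by linarith
  let ?d = "rotate (Suc i) xs"
  have "rotate (Suc i) xs = take (Suc m) ?d @ drop (Suc m) ?d" by simp
  moreover have "last (take (Suc m) ?d) = xs ! j"
    using \<open>Suc m < n\<close> j_eq n_def by (simp add: take_Suc_conv_app_nth nth_rotate)
  moreover have "hd (drop (Suc m) ?d) = xs ! (Suc j mod length xs)"
    using \<open>Suc m < n\<close> j_eq n_def by (simp add: hd_drop_conv_nth nth_rotate) (metis mod_Suc_eq)
  ultimately show ?thesis
    using that[of "take (Suc m) ?d" "drop (Suc m) ?d"] \<open>Suc m < n\<close> n_def by force
qed

definition cyclic_path :: "('a \<Rightarrow> 'a \<Rightarrow> bool) \<Rightarrow> 'a list \<Rightarrow> bool" where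
  "cyclic_path E c \<longleftrightarrow> c \<noteq> [] \<and> successively E c \<and> E (last c) (hd c)"

definition is_path :: "'a set \<Rightarrow> ('a \<Rightarrow> 'a \<Rightarrow> bool) \<Rightarrow> 'a list \<Rightarrow> bool" where
  "is_path V E p \<longleftrightarrow> p \<noteq> [] \<and> distinct p \<and> set p \<subseteq> V \<and> successively E p"

lemma cyclic_path_iff_nth:
  assumes "c \<noteq> []"
  shows "cyclic_path E c \<longleftrightarrow> (\<forall>i<length c. E (c ! i) (c ! ((i + 1) mod length c)))"
proof -
  have "(\<forall>i<length c. E (c ! i) (c ! ((i + 1) mod length c))) \<longleftrightarrow>
        (\<forall>i. Suc i < length c \<longrightarrow> E (c ! i) (c ! Suc i)) \<and> E (c ! (length c - 1)) (c ! 0)"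
    (is "?lhs \<longleftrightarrow> ?rhs")
  proof
    assume L: ?lhs
    have "E (c ! i) (c ! Suc i)" if "Suc i < length c" for i
      using L[rule_format, of i] that by simp
    moreover have "E (c ! (length c - 1)) (c ! 0)"
      using L[rule_format, of "length c - 1"] assms by simp
    ultimately show ?rhs by blast
  next
    assume ?rhs
    show ?lhs
    proof (intro allI impI)
      fix i assume "i < length c"
      then consider "Suc i < length c" | "i = length c - 1" "Suc i = length c" by linarith
      then show "E (c ! i) (c ! ((i + 1) mod length c))" using \<open>?rhs\<close> by cases auto
    qed
  qed
  then show ?thesis
    using assms by (simp add: cyclic_path_def successively_conv_nth last_conv_nth hd_conv_nth)
qed

lemma is_cycle_iff_cyclic_path:
  "is_cycle V E c \<longleftrightarrow> length c \<ge> 3 \<and> distinct c \<and> set c \<subseteq> V \<and> cyclic_path E c"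
proof -
  have "length c \<ge> 3 \<Longrightarrow> c \<noteq> []" by auto
  then show ?thesis unfolding is_cycle_def using cyclic_path_iff_nth[where c=c] by auto
qed

lemma cyclic_path_rotate1: "cyclic_path E c \<Longrightarrow> cyclic_path E (rotate1 c)"
  by (cases c; cases "tl c")
     (auto simp: cyclic_path_def successively_append_iff simp del: append_Cons)

lemma cyclic_path_rotate: "cyclic_path E c \<Longrightarrow> cyclic_path E (rotate n c)"
  by (induction n) (simp_all add: rotate_Suc cyclic_path_rotate1)

lemma is_cycle_rotate: "is_cycle V E c \<Longrightarrow> is_cycle V E (rotate n c)"
  by (simp add: is_cycle_iff_cyclic_path cyclic_path_rotate)

lemma is_cycle_append_path:
  assumes "is_cycle V E c" "is_path (V - set c) E p"
    and "E (last c) (hd p)" "E (last p) (hd c)"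
  shows "is_cycle V E (c @ p)"
  using assms by (auto simp: is_cycle_iff_cyclic_path is_path_def cyclic_path_def successively_append_iff)

lemma is_cycle_reroute:
  assumes "symp E" "is_cycle V E (a @ b)" "a \<noteq> []" "b \<noteq> []" "is_path (V - set (a @ b)) E p"
    and "E (hd a) (hd b)" "E (last b) (hd p)" "E (last p) (last a)"
  shows "is_cycle V E (rev a @ b @ p)"
proof -
  have "successively E (rev a)"
    using assms(1,2) by (auto simp: is_cycle_iff_cyclic_path cyclic_path_def successively_append_iff
        intro: successively_mono dest: sympD)
  then show ?thesis
    using assms(2-) by (auto simp: is_cycle_iff_cyclic_path is_path_def cyclic_path_def
        successively_append_iff last_rev hd_rev)
qed

lemma path_of_rtranclp_induced_edges:
  assumes "(induced_edges E S)\<^sup>*\<^sup>* a b" "a \<in> S"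
  shows "\<exists>p. is_path S E p \<and> hd p = a \<and> last p = b"
  using assms(1)
proof (induction rule: rtranclp_induct)
  case base
  then show ?case using assms(2) by (intro exI[of _ "[a]"]) (simp add: is_path_def)
next
  case (step y z)
  then obtain p where p: "is_path S E p" "hd p = a" "last p = y" by blast
  have z: "z \<in> S" "E y z" using step(2) by (auto simp: induced_edges_def)
  show ?case
  proof (cases "z \<in> set p")
    case True
    then obtain m where m: "m < length p" "p ! m = z" by (auto simp: in_set_conv_nth)
    have "successively E (take (Suc m) p)"
      using p(1) successively_append_iff[of E "take (Suc m) p" "drop (Suc m) p"]
      by (simp add: is_path_def)
    then have "is_path S E (take (Suc m) p)"
      using p(1) set_take_subset[of "Suc m" p] by (auto simp: is_path_def)
    moreover have "hd (take (Suc m) p) = a"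
      using p by (simp add: is_path_def)
    moreover have "last (take (Suc m) p) = z"
      using m by (simp add: take_Suc_conv_app_nth)
    ultimately show ?thesis by blast
  next
    case False
    then have "is_path S E (p @ [z])"
      using p z by (auto simp: is_path_def successively_append_iff)
    then show ?thesis using p by (intro exI[of _ "p @ [z]"]) (auto simp: is_path_def)
  qed
qed

lemma longest_cycle_no_detour:
  assumes "longest_cycle V E C" "i < length C" "is_path (V - set C) E p"
    and "E (C ! i) (hd p)" "E (last p) (C ! (Suc i mod length C))"
  shows False
proof -
  let ?d = "rotate (Suc i) C"
  have "is_cycle V E ?d"
    using assms(1) is_cycle_rotate by (auto simp: longest_cycle_def)
  then have "is_cycle V E (?d @ p)"
    using assms(2-) by (intro is_cycle_append_path) (simp_all add: hd_rotate_Suc last_rotate_Suc)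
  then have "length (?d @ p) \<le> length C"
    using assms(1) unfolding longest_cycle_def by blast
  then show False using assms(3) by (simp add: is_path_def)
qed

lemma longest_cycle_no_crossing:
  assumes "symp E" "longest_cycle V E C" "i < length C" "j < length C" "i \<noteq> j"
    and "is_path (V - set C) E p" "E (C ! i) (hd p)" "E (last p) (C ! j)"
    and "E (C ! (Suc i mod length C)) (C ! (Suc j mod length C))"
  shows False
proof -
  obtain a b where ab: "rotate (Suc i) C = a @ b" "a \<noteq> []" "b \<noteq> []"
    "last a = C ! j" "hd b = C ! (Suc j mod length C)"
    using rotate_Suc_split[OF assms(3-5)] by blast
  have "hd a = C ! (Suc i mod length C)" "last b = C ! i"
    using ab(1-3) hd_rotate_Suc[OF assms(3)] last_rotate_Suc[OF assms(3)] by simp_all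
  moreover have "is_cycle V E (a @ b)"
    using assms(2) is_cycle_rotate ab(1) by (metis longest_cycle_def)
  moreover have "set (a @ b) = set C" by (metis ab(1) set_rotate)
  ultimately have "is_cycle V E (rev a @ b @ p)"
    using assms(1,6-) ab by (intro is_cycle_reroute) simp_all
  then have "length (rev a @ b @ p) \<le> length C"
    using assms(2) unfolding longest_cycle_def by blast
  moreover have "length (a @ b) = length C" by (metis ab(1) length_rotate)
  moreover have "length p > 0" using assms(6) by (simp add: is_path_def)
  ultimately show False by simp
qed

lemma induced_edges_idem [simp]: "induced_edges (induced_edges E S) S = induced_edges E S"
  by (auto simp: induced_edges_def fun_eq_iff)

lemma symp_induced_edges: "symp E \<Longrightarrow> symp (induced_edges E S)"
  unfolding symp_def induced_edges_def by blast

lemma is_component_subset: "is_component S (induced_edges E S) X \<Longrightarrow> X \<subseteq> S"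
  by (auto simp: is_component_def)

lemma is_component_closed:
  assumes "is_component S (induced_edges E S) X" "a \<in> X" "E a b" "b \<in> S"
  shows "b \<in> X"
proof -
  obtain x where X: "X = {y \<in> S. (induced_edges E S)\<^sup>*\<^sup>* x y}"
    using assms(1) unfolding is_component_def by auto
  then have "(induced_edges E S)\<^sup>*\<^sup>* x a" "a \<in> S" using assms(2) by auto
  moreover have "induced_edges E S a b"
    using \<open>a \<in> S\<close> assms(3,4) by (simp add: induced_edges_def)
  ultimately show ?thesis
    using X assms(4) rtranclp.rtrancl_into_rtrancl by fastforce
qed

lemma is_component_path:
  assumes "symp E" "is_component S (induced_edges E S) X" "a \<in> X" "b \<in> X"
  shows "\<exists>p. is_path S E p \<and> hd p = a \<and> last p = b"
proof -
  obtain x where X: "X = {y \<in> S. (induced_edges E S)\<^sup>*\<^sup>* x y}"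
    using assms(2) unfolding is_component_def by auto
  have "(induced_edges E S)\<^sup>*\<^sup>* x a" "(induced_edges E S)\<^sup>*\<^sup>* x b"
    using assms(3,4) X by auto
  moreover have "symp (induced_edges E S)\<^sup>*\<^sup>*"
    using symp_rtranclp[OF symp_induced_edges[OF assms(1)]] .
  ultimately have "(induced_edges E S)\<^sup>*\<^sup>* a b"
    using rtranclp_trans sympD by metis
  moreover have "a \<in> S" using assms(3) X by blast
  ultimately show ?thesis by (rule path_of_rtranclp_induced_edges)
qed

lemma is_component_has_edge:
  assumes "is_component S (induced_edges E S) X" "finite S" "card X \<noteq> 1"
  obtains x w where "x \<in> X" "w \<in> X" "E x w"
proof -
  obtain x where x: "x \<in> S" and X: "X = {y \<in> S. (induced_edges E S)\<^sup>*\<^sup>* x y}"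
    using assms(1) by (auto simp: is_component_def)
  then have "X \<noteq> {x}" using assms(3) by auto
  then obtain v where "(induced_edges E S)\<^sup>*\<^sup>* x v" "v \<noteq> x" using X x by auto
  then obtain w where xw: "induced_edges E S x w"
    by (auto elim: converse_rtranclpE)
  then have "w \<in> X" using X by (auto simp: induced_edges_def)
  moreover have "x \<in> X" using X x by simp
  ultimately show ?thesis
    using that xw by (simp add: induced_edges_def)
qed

lemma k_connected_separator_card:
  assumes "k_connected k V E" "N \<subseteq> V" "X \<subseteq> V - N" "x \<in> X" "y \<in> V - N - X"
    and "\<And>u v. u \<in> X \<Longrightarrow> E u v \<Longrightarrow> v \<in> X \<union> N"
  shows "k \<le> card N"
proof (rule ccontr)
  assume "\<not> k \<le> card N"
  then have "connected_graph (V - N) (induced_edges E (V - N))"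
    using assms(1,2) by (simp add: k_connected_def)
  then have "(induced_edges E (V - N))\<^sup>*\<^sup>* x y"
    using assms(3-5) by (auto simp: connected_graph_def)
  then have "y \<in> X"
    by (induction rule: rtranclp_induct) (use assms(4,6) in \<open>auto simp: induced_edges_def\<close>)
  then show False using assms(5) by simp
qed

lemma has_induced_K2_kK1:
  assumes "graph V E" "E x w" "finite T" "k \<le> card T" "T \<subseteq> V - {x, w}"
    and "\<And>u. u \<in> T \<Longrightarrow> \<not> E u x \<and> \<not> E u w"
    and "\<And>u v. u \<in> T \<Longrightarrow> v \<in> T \<Longrightarrow> \<not> E u v"
  shows "has_induced_copy (K2_kK1_V k) (K2_kK1_E k) V E"
proof -
  have sym: "E u v \<Longrightarrow> E v u" and irrefl: "\<not> E u u" and "x \<in> V" "w \<in> V" for u v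
    using assms(1,2) by (auto simp: graph_def)
  obtain T' where T': "T' \<subseteq> T" "card T' = k"
    using obtain_subset_with_card_n[OF assms(4)] by blast
  then obtain g where g: "bij_betw g {0..<k} T'"
    using ex_bij_betw_nat_finite[of T'] finite_subset[OF T'(1) assms(3)] by blast
  define f where "f t = (if t = 0 then x else if t = 1 then w else g (t - 2))" for t
  have f_small: "f t \<in> {x, w}" if "t < 2" for t
    using that by (simp add: f_def)
  have f_large: "f t \<in> T" if "2 \<le> t" "t \<le> k + 1" for t
    using that g T'(1) by (auto simp: f_def bij_betw_def)
  have "inj_on f (K2_kK1_V k)"
  proof (rule inj_onI)
    fix a b assume ab: "a \<in> K2_kK1_V k" "b \<in> K2_kK1_V k" "f a = f b"
    have "x \<noteq> w" using assms(2) irrefl by blast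
    show "a = b"
    proof (cases "a < 2"; cases "b < 2")
      assume "a < 2" "b < 2"
      then show "a = b" using ab(3) \<open>x \<noteq> w\<close> by (auto simp: f_def less_2_cases_iff)
    next
      assume "\<not> a < 2" "\<not> b < 2"
      then have "g (a - 2) = g (b - 2)" "a - 2 < k" "b - 2 < k"
        using ab by (auto simp: f_def K2_kK1_V_def)
      then have "a - 2 = b - 2"
        using g by (auto simp: bij_betw_def inj_on_def)
      then show "a = b" using \<open>\<not> a < 2\<close> \<open>\<not> b < 2\<close> by simp
    next
      assume "a < 2" "\<not> b < 2"
      then have "f a \<in> {x, w}" "f b \<in> T"
        using ab(2) f_small[of a] f_large[of b] by (simp_all add: K2_kK1_V_def)
      then show "a = b" using ab(3) assms(5) by auto
    next
      assume "\<not> a < 2" "b < 2"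
      then have "f a \<in> T" "f b \<in> {x, w}"
        using ab(1) f_small[of b] f_large[of a] by (simp_all add: K2_kK1_V_def)
      then show "a = b" using ab(3) assms(5) by auto
    qed
  qed
  moreover have "f ` K2_kK1_V k \<subseteq> V"
  proof
    fix y assume "y \<in> f ` K2_kK1_V k"
    then obtain t where "t \<le> k + 1" "y = f t" by (auto simp: K2_kK1_V_def)
    then show "y \<in> V"
      using f_small[of t] f_large[of t] assms(5) \<open>x \<in> V\<close> \<open>w \<in> V\<close> by (cases "t < 2") auto
  qed
  moreover have "E (f a) (f b) \<longleftrightarrow> K2_kK1_E k a b"
    if "a \<in> K2_kK1_V k" "b \<in> K2_kK1_V k" for a b
  proof (cases "a < 2 \<and> b < 2")
    case True
    then show ?thesis
      using assms(2) sym[OF assms(2)] irrefl by (auto simp: f_def K2_kK1_E_def less_2_cases_iff)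
  next
    case False
    have "\<not> E (f a) (f b)"
    proof (cases "a < 2"; cases "b < 2")
      assume "\<not> a < 2" "\<not> b < 2"
      then show ?thesis using that f_large assms(7) by (simp add: K2_kK1_V_def)
    next
      assume "a < 2" "\<not> b < 2"
      then have "\<not> E (f b) (f a)"
        using that f_small[of a] f_large[of b] assms(6) by (auto simp: K2_kK1_V_def)
      then show ?thesis using sym by blast
    next
      assume "\<not> a < 2" "b < 2"
      then show ?thesis using that f_small[of b] f_large[of a] assms(6) by (auto simp: K2_kK1_V_def)
    qed (use False in simp)
    then show ?thesis using False by (auto simp: K2_kK1_E_def)
  qed
  ultimately show ?thesis
    unfolding has_induced_copy_def by blast
qed

locale longest_cycle_component =
  fixes V :: "'a set" and E :: "'a \<Rightarrow> 'a \<Rightarrow> bool" and C :: "'a list" and X :: "'a set"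
  assumes graph: "graph V E"
    and longest: "longest_cycle V E C"
    and component: "is_component (V - set C) (induced_edges E (V - set C)) X"
begin

definition attachments :: "nat set" where
  "attachments = {i. i < length C \<and> (\<exists>h\<in>X. E (C ! i) h)}"

lemma symp_E: "symp E"
  using graph by (auto simp: graph_def intro: sympI)

lemma irrefl_E: "\<not> E u u"
  using graph by (simp add: graph_def)

lemma distinct_C: "distinct C" and set_C_subset: "set C \<subseteq> V" and length_C_ge_3: "length C \<ge> 3"
  using longest by (auto simp: longest_cycle_def is_cycle_def)

lemma component_outside_cycle: "X \<subseteq> V - set C"
  using is_component_subset[OF component] .

lemma successor_in_cycle: "C ! (Suc i mod length C) \<in> set C"
  using length_C_ge_3 by (intro nth_mem mod_less_divisor) linarith

lemma attachment_vertices_in_cycle: "(!) C ` attachments \<subseteq> set C"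
  by (auto simp: attachments_def)

lemma successor_not_adjacent:
  assumes "i \<in> attachments" "h \<in> X"
  shows "\<not> E (C ! (Suc i mod length C)) h"
proof
  assume succ_h: "E (C ! (Suc i mod length C)) h"
  obtain h0 where h0: "h0 \<in> X" "E (C ! i) h0" and i: "i < length C"
    using assms(1) by (auto simp: attachments_def)
  obtain p where p: "is_path (V - set C) E p" "hd p = h0" "last p = h"
    using is_component_path[OF symp_E component h0(1) assms(2)] by blast
  then show False
    using longest_cycle_no_detour[OF longest i p(1)] h0(2) sympD[OF symp_E succ_h] by simp
qed

lemma successors_not_adjacent:
  assumes "i \<in> attachments" "j \<in> attachments" "i \<noteq> j"
  shows "\<not> E (C ! (Suc i mod length C)) (C ! (Suc j mod length C))"
proof
  assume succ_succ: "E (C ! (Suc i mod length C)) (C ! (Suc j mod length C))"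
  obtain hi where hi: "hi \<in> X" "E (C ! i) hi" and i: "i < length C"
    using assms(1) by (auto simp: attachments_def)
  obtain hj where hj: "hj \<in> X" "E (C ! j) hj" and j: "j < length C"
    using assms(2) by (auto simp: attachments_def)
  obtain p where p: "is_path (V - set C) E p" "hd p = hi" "last p = hj"
    using is_component_path[OF symp_E component hi(1) hj(1)] by blast
  then show False
    using longest_cycle_no_crossing[OF symp_E longest i j assms(3) p(1)] hi(2)
      sympD[OF symp_E hj(2)] succ_succ by simp
qed

lemma card_attachments:
  assumes "k_connected k V E"
  shows "k \<le> card attachments"
proof -
  let ?N = "(!) C ` attachments"
  obtain x where "x \<in> X"
    using component by (auto simp: is_component_def)
  obtain y where y: "y \<in> set C" "y \<notin> ?N"
  proof (cases "attachments = {}")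
    case True
    have "C ! 0 \<in> set C" using length_C_ge_3 by (intro nth_mem) linarith
    then show ?thesis using that True by simp
  next
    case False
    \<comment> \<open>the successor of an attachment has no neighbour in X, so it is not an attachment\<close>
    then obtain i where "i \<in> attachments" by blast
    have "C ! (Suc i mod length C) \<notin> ?N"
    proof
      assume "C ! (Suc i mod length C) \<in> ?N"
      then obtain j h where "C ! (Suc i mod length C) = C ! j" "h \<in> X" "E (C ! j) h"
        by (auto simp: attachments_def)
      then show False using successor_not_adjacent[OF \<open>i \<in> attachments\<close>] by simp
    qed
    then show ?thesis using that successor_in_cycle by blast
  qed
  have closed: "v \<in> X \<union> ?N" if "u \<in> X" "E u v" for u v
  proof (cases "v \<in> set C")
    case True
    then obtain j where "j < length C" "v = C ! j" by (auto simp: in_set_conv_nth)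
    then show ?thesis
      using that sympD[OF symp_E that(2)] by (auto simp: attachments_def)
  next
    case False
    then have "v \<in> V - set C" using that(2) graph by (auto simp: graph_def)
    then show ?thesis using is_component_closed[OF component that] by simp
  qed
  have "k \<le> card ?N"
  proof (rule k_connected_separator_card[OF assms _ _ \<open>x \<in> X\<close> _ closed])
    show "?N \<subseteq> V" "X \<subseteq> V - ?N" "y \<in> V - ?N - X"
      using attachment_vertices_in_cycle set_C_subset component_outside_cycle y by blast+
  qed
  also have "\<dots> \<le> card attachments"
    by (rule card_image_le) (simp add: attachments_def)
  finally show ?thesis .
qed

lemma has_induced_K2_kK1_if_nontrivial:
  assumes "card X \<noteq> 1" "k \<le> card attachments"
  shows "has_induced_copy (K2_kK1_V k) (K2_kK1_E k) V E"
proof -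
  have "finite (V - set C)" using graph by (simp add: graph_def)
  then obtain x w where xw: "x \<in> X" "w \<in> X" "E x w"
    using is_component_has_edge[OF component _ assms(1)] by blast
  define succ where "succ i = C ! (Suc i mod length C)" for i
  have "inj_on succ attachments"
  proof (rule inj_onI)
    fix i j assume ij: "i \<in> attachments" "j \<in> attachments" "succ i = succ j"
    then have "i < length C" "j < length C" by (simp_all add: attachments_def)
    then have "Suc i mod length C < length C" "Suc j mod length C < length C"
      by (auto intro!: mod_less_divisor)
    then have "Suc i mod length C = Suc j mod length C"
      using ij(3) nth_eq_iff_index_eq[OF distinct_C] by (simp add: succ_def)
    with \<open>i < length C\<close> \<open>j < length C\<close>
    show "i = j" using inj_on_Suc_mod by (auto simp: inj_on_def)
  qed
  then have "card (succ ` attachments) = card attachments" by (rule card_image)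
  show ?thesis
  proof (rule has_induced_K2_kK1[OF graph xw(3)])
    show "finite (succ ` attachments)" by (simp add: attachments_def)
    show "k \<le> card (succ ` attachments)" using \<open>card (succ ` attachments) = _\<close> assms(2) by simp
    show "succ ` attachments \<subseteq> V - {x, w}"
      using successor_in_cycle set_C_subset component_outside_cycle xw(1,2)
      unfolding succ_def by blast
  next
    fix u assume "u \<in> succ ` attachments"
    then show "\<not> E u x \<and> \<not> E u w"
      using successor_not_adjacent xw(1,2) unfolding succ_def by blast
  next
    fix u v assume "u \<in> succ ` attachments" "v \<in> succ ` attachments"
    then obtain i j where "i \<in> attachments" "j \<in> attachments" "u = succ i" "v = succ j" by blast
    then show "\<not> E u v"
      using successors_not_adjacent irrefl_E unfolding succ_def by (cases "i = j") auto
  qed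
qed

end

theorem mainTheorem8:
  fixes V :: "'a set" and E :: "'a \<Rightarrow> 'a \<Rightarrow> bool" and k :: nat and C :: "'a list"
  assumes "k \<ge> 2"
    and "graph V E"
    and "k_connected k V E"
    and "R_free (K2_kK1_V k) (K2_kK1_E k) V E"
    and "longest_cycle V E C"
  shows "\<forall>X. is_component (V - set C) (induced_edges E (V - set C)) X \<longrightarrow> card X = 1"
\<comment> \<open>The argument does not use k \<ge> 2.\<close>
proof (intro allI impI)
  fix X
  assume "is_component (V - set C) (induced_edges E (V - set C)) X"
  then interpret longest_cycle_component V E C X
    using assms(2,5) by unfold_locales
  show "card X = 1"
  proof (rule ccontr)
    assume "card X \<noteq> 1"
    then have "has_induced_copy (K2_kK1_V k) (K2_kK1_E k) V E"
      using has_induced_K2_kK1_if_nontrivial card_attachments[OF assms(3)] by blast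
    then show False using assms(4) by (simp add: R_free_def)
  qed
qed

end
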